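(* Let $\eta_s:\mathcal{V}\to\mathbb{Z}[\mathcal{V}]$ be a solvable update with partition $\mathcal{S}_1,\dots,\mathcal{S}_m$ and matrices $A_{\mathcal{S}_i}$, and let $\vartheta$ be the automorphism of $\mathbb{A}[\mathcal{V}]$ defined blockwise by $\vec{\vartheta}_{\mathcal{S}}=P_{\mathcal{S}}\cdot\vec{x}_{\mathcal{S}}$ for each block $\mathcal{S}$, where $J(A_{\mathcal{S}})=P_{\mathcal{S}}\cdot A_{\mathcal{S}}\cdot P_{\mathcal{S}}^{-1}$ is the Jordan normal form of $A_{\mathcal{S}}$, such that $\eta_t=\vartheta^{-1}\circ\eta_s\circ\vartheta$ is a twn-update. If $\mathrm{cl}^t$ is a closed form of $\eta_t$ with start value $n_0$, then $\mathrm{cl}^s=\vartheta\circ\mathrm{cl}^t\circ\vartheta^{-1}$ is a closed form of $\eta_s$ with start value $n_0$.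
   Context: $\mathcal{V}=\{x_1,\dots,x_d\}$; $\mathbb{A}$ denotes the algebraic numbers. Maps $\mathcal{V}\to\mathbb{A}[\mathcal{V}]$ are applied to expressions by replacing each variable $v$ by its image. Composition convention: $(\eta_2\circ\eta_1)(x)$ is the polynomial $\eta_1(x)$ in which every variable $v$ is replaced by $\eta_2(v)$. Thus $\eta_t(x)$ is $\vartheta(x)$ with each variable $v$ replaced by $\eta_s(v)$ and then each variable $v$ replaced by $\vartheta^{-1}(v)$, and $\mathrm{cl}^s_x$ is $\vartheta^{-1}(x)$ with each variable $v$ replaced by $\mathrm{cl}^t_v$ and then each variable $v$ replaced by $\vartheta(v)$. $\vartheta^{-1}$ is given blockwise by $P_{\mathcal{S}}^{-1}\cdot\vec{x}_{\mathcal{S}}$. Solvable update: $\eta:\mathcal{V}\to\mathbb{Z}[\mathcal{V}]$ is solvable if there is a partition $\mathcal{S}_1,\dots,\mathcal{S}_m$ of $\mathcal{V}$ such that for all $i$, $\vec{\eta}_{\mathcal{S}_i}=A_{\mathcal{S}_i}\cdot\vec{x}_{\mathcal{S}_i}+\vec{p}_{\mathcal{S}_i}$ for some $A_{\mathcal{S}_i}\in\mathbb{Z}^{|\mathcal{S}_i|\times|\mathcal{S}_i|}$ and $\vec{p}_{\mathcal{S}_i}\in\mathbb{Z}[\bigcup_{j<i}\mathcal{S}_j]^{|\mathcal{S}_i|}$, where $\vec{\eta}_{\mathcal{S}_i}$ is the vector of $\eta(x_j)$ and $\vec{x}_{\mathcal{S}_i}$ the vector of $x_j$ for $x_j\in\mathcal{S}_i$.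 Twn-update: $\eta:\mathcal{V}\to\mathbb{A}[\mathcal{V}]$ with $\eta(x_i)=c_i\cdot x_i+p_i$ for some $c_i\in\mathbb{A}$ and $p_i\in\mathbb{A}[x_1,\dots,x_{i-1}]$, for all $1\le i\le d$. Closed form of an update $\eta$ with start value $n_0$: a tuple $(\mathrm{cl}_{x_1},\dots,\mathrm{cl}_{x_d})$ of expressions $\sum_{j=1}^{\ell}\alpha_j n^{a_j}b_j^n$ ($\ell,a_j\in\mathbb{N}$, $b_j\in\mathbb{A}$, $\alpha_j\in\mathbb{A}[\mathcal{V}]$) such that for all $\sigma:\mathcal{V}\cup\{n\}\to\mathbb{Z}$ with $\sigma(n)\ge n_0$ and all $i$, $\sigma(\mathrm{cl}_{x_i})=\sigma(\eta^n(x_i))$, where $\eta^n$ is the $n$-fold application of $\eta$ and $\sigma(e)$ substitutes $\sigma(v)$ for each variable $v$. *)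

theory Defs
  imports "Jordan_Normal_Form.Jordan_Normal_Form" "HOL-Computational_Algebra.Polynomial"
begin

text \<open>Variables x_1,...,x_d are represented by the indices 0,...,d-1.
  Polynomials over the algebraic numbers (subset of the complex numbers) are
  represented by a deep embedding of polynomial expressions; two expressions denote
  the same polynomial iff they evaluate equally everywhere (complex field is infinite).\<close>

datatype pexpr = Var nat | Const complex | Add pexpr pexpr | Mul pexpr pexpr

fun peval :: "(nat \<Rightarrow> complex) \<Rightarrow> pexpr \<Rightarrow> complex" where
  "peval \<sigma> (Var v) = \<sigma> v"
| "peval \<sigma> (Const c) = c"
| "peval \<sigma> (Add p q) = peval \<sigma> p + peval \<sigma> q"
| "peval \<sigma> (Mul p q) = peval \<sigma> p * peval \<sigma> q"

fun psubst :: "(nat \<Rightarrow> pexpr) \<Rightarrow> pexpr \<Rightarrow> pexpr" where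
  "psubst \<eta> (Var v) = \<eta> v"
| "psubst \<eta> (Const c) = Const c"
| "psubst \<eta> (Add p q) = Add (psubst \<eta> p) (psubst \<eta> q)"
| "psubst \<eta> (Mul p q) = Mul (psubst \<eta> p) (psubst \<eta> q)"

fun pvars :: "pexpr \<Rightarrow> nat set" where
  "pvars (Var v) = {v}"
| "pvars (Const c) = {}"
| "pvars (Add p q) = pvars p \<union> pvars q"
| "pvars (Mul p q) = pvars p \<union> pvars q"

fun pconsts :: "pexpr \<Rightarrow> complex set" where
  "pconsts (Var v) = {}"
| "pconsts (Const c) = {c}"
| "pconsts (Add p q) = pconsts p \<union> pconsts q"
| "pconsts (Mul p q) = pconsts p \<union> pconsts q"

definition poly_eq :: "pexpr \<Rightarrow> pexpr \<Rightarrow> bool" where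
  "poly_eq p q \<longleftrightarrow> (\<forall>\<sigma>. peval \<sigma> p = peval \<sigma> q)"

definition in_poly_ring :: "complex set \<Rightarrow> nat set \<Rightarrow> pexpr \<Rightarrow> bool" where
  "in_poly_ring K W p \<longleftrightarrow> (\<exists>q. pconsts q \<subseteq> K \<and> pvars q \<subseteq> W \<and> poly_eq p q)"

definition alg_nums :: "complex set" where
  "alg_nums = {z. algebraic z}"

fun upd_pow :: "(nat \<Rightarrow> pexpr) \<Rightarrow> nat \<Rightarrow> nat \<Rightarrow> pexpr" where
  "upd_pow \<eta> 0 = Var"
| "upd_pow \<eta> (Suc n) = (\<lambda>x. psubst \<eta> (upd_pow \<eta> n x))"

definition lin_expr :: "complex list \<Rightarrow> nat list \<Rightarrow> pexpr" where
  "lin_expr cs vs = foldr (\<lambda>(c,v) e. Add (Mul (Const c) (Var v)) e) (zip cs vs) (Const 0)"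

definition mat_row_list :: "complex mat \<Rightarrow> nat \<Rightarrow> complex list" where
  "mat_row_list M r = map (\<lambda>c. M $$ (r,c)) [0..<dim_col M]"

text \<open>Solvable update on variables {0..<d} with partition Ss (blocks as ordered lists,
  S_1 first) and integer matrices As.\<close>
definition solvable_with :: "nat \<Rightarrow> (nat \<Rightarrow> pexpr) \<Rightarrow> nat list list \<Rightarrow> int mat list \<Rightarrow> bool" where
  "solvable_with d \<eta> Ss As \<longleftrightarrow>
     distinct (concat Ss) \<and> set (concat Ss) = {0..<d} \<and> [] \<notin> set Ss \<and>
     length As = length Ss \<and>
     (\<forall>i < length Ss.
        As ! i \<in> carrier_mat (length (Ss ! i)) (length (Ss ! i)) \<and>
        (\<forall>r < length (Ss ! i). \<exists>p.
            in_poly_ring \<int> (\<Union>j<i. set (Ss ! j)) p \<and>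
            poly_eq (\<eta> (Ss ! i ! r))
              (Add (lin_expr (mat_row_list (map_mat of_int (As ! i)) r) (Ss ! i)) p)))"

definition twn_update :: "nat \<Rightarrow> (nat \<Rightarrow> pexpr) \<Rightarrow> bool" where
  "twn_update d \<eta> \<longleftrightarrow>
     (\<forall>i<d. \<exists>c p. algebraic c \<and> in_poly_ring alg_nums {0..<i} p \<and>
                   poly_eq (\<eta> i) (Add (Mul (Const c) (Var i)) p))"

text \<open>Closed-form expressions: lists of terms (alpha, a, b) meaning alpha * n^a * b^n.\<close>
type_synonym cform = "(pexpr \<times> nat \<times> complex) list"

definition cf_eval :: "(nat \<Rightarrow> complex) \<Rightarrow> nat \<Rightarrow> cform \<Rightarrow> complex" where
  "cf_eval \<sigma> n cf = (\<Sum>(\<alpha>,a,b)\<leftarrow>cf. peval \<sigma> \<alpha> * of_nat n ^ a * b ^ n)"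

definition is_closed_form :: "nat \<Rightarrow> (nat \<Rightarrow> pexpr) \<Rightarrow> nat \<Rightarrow> (nat \<Rightarrow> cform) \<Rightarrow> bool" where
  "is_closed_form d \<eta> n0 cl \<longleftrightarrow>
     (\<forall>i<d. (\<forall>(\<alpha>,a,b)\<in>set (cl i). in_poly_ring alg_nums {0..<d} \<alpha> \<and> algebraic b) \<and>
            (\<forall>\<sigma> :: nat \<Rightarrow> int. \<forall>n \<ge> n0.
               cf_eval (of_int \<circ> \<sigma>) n (cl i) = peval (of_int \<circ> \<sigma>) (upd_pow \<eta> n i)))"

fun cf_of :: "(nat \<Rightarrow> cform) \<Rightarrow> pexpr \<Rightarrow> cform" where
  "cf_of cl (Var v) = cl v"
| "cf_of cl (Const c) = [(Const c, 0, 1)]"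
| "cf_of cl (Add p q) = cf_of cl p @ cf_of cl q"
| "cf_of cl (Mul p q) =
     concat (map (\<lambda>(\<alpha>,a,b). map (\<lambda>(\<beta>,a',b'). (Mul \<alpha> \<beta>, a + a', b * b')) (cf_of cl q)) (cf_of cl p))"

definition cf_subst :: "(nat \<Rightarrow> pexpr) \<Rightarrow> cform \<Rightarrow> cform" where
  "cf_subst \<theta> cf = map (\<lambda>(\<alpha>,a,b). (psubst \<theta> \<alpha>, a, b)) cf"

end

theory Submission
  imports Defs
begin

(* A closed form is an identity between polynomials in the initial values, so it holds not only
   for integer but for all complex valuations: a polynomial vanishing on the infinite set of
   integers in every variable vanishes identically.  Evaluating cl^s at a valuation sigma thus
   evaluates cl^t at the transformed valuation theta(sigma), which gives
   theta^-1(eta_t^n(theta(sigma))).  As eta_t = theta^-1 o eta_s o theta and theta^-1 undoes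
   theta on the variables in use, this is eta_s^n(sigma).  Only the invertibility of the blocks
   P_S matters. *)

definition subst_val :: "(nat \<Rightarrow> pexpr) \<Rightarrow> (nat \<Rightarrow> complex) \<Rightarrow> nat \<Rightarrow> complex" where
  "subst_val \<eta> \<sigma> = (\<lambda>v. peval \<sigma> (\<eta> v))"

lemma peval_psubst: "peval \<sigma> (psubst \<eta> p) = peval (subst_val \<eta> \<sigma>) p"
  by (induction p) (auto simp: subst_val_def)

lemma subst_val_psubst: "subst_val (\<lambda>x. psubst \<eta> (\<zeta> x)) \<sigma> = subst_val \<zeta> (subst_val \<eta> \<sigma>)"
  by (simp add: subst_val_def peval_psubst)

lemma peval_upd_pow: "peval \<sigma> (upd_pow \<eta> n x) = (subst_val \<eta> ^^ n) \<sigma> x"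
proof (induction n arbitrary: \<sigma>)
  case 0
  then show ?case by simp
next
  case (Suc n)
  have "peval \<sigma> (upd_pow \<eta> (Suc n) x) = (subst_val \<eta> ^^ n) (subst_val \<eta> \<sigma>) x"
    by (simp add: peval_psubst Suc.IH)
  then show ?case
    by (simp add: funpow_Suc_right del: funpow.simps)
qed

lemma peval_cong: "(\<And>v. v \<in> pvars p \<Longrightarrow> \<sigma> v = \<sigma>' v) \<Longrightarrow> peval \<sigma> p = peval \<sigma>' p"
  by (induction p) auto

lemma peval_cong_in_poly_ring:
  assumes "in_poly_ring K W p" "\<forall>v\<in>W. \<sigma> v = \<sigma>' v"
  shows "peval \<sigma> p = peval \<sigma>' p"
proof -
  obtain q where "pvars q \<subseteq> W" "poly_eq p q"
    using assms(1) by (auto simp: in_poly_ring_def)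
  then show ?thesis
    using assms(2) peval_cong[of q \<sigma> \<sigma>'] by (auto simp: poly_eq_def)
qed

lemma in_poly_ring_Mul_Const:
  assumes "c \<in> K" "in_poly_ring K W p"
  shows "in_poly_ring K W (Mul (Const c) p)"
proof -
  obtain q where "pconsts q \<subseteq> K" "pvars q \<subseteq> W" "poly_eq p q"
    using assms(2) by (auto simp: in_poly_ring_def)
  then show ?thesis
    using assms(1) unfolding in_poly_ring_def poly_eq_def
    by (intro exI[of _ "Mul (Const c) q"]) auto
qed

lemma pvars_psubst: "pvars (psubst \<theta> p) = (\<Union>v\<in>pvars p. pvars (\<theta> v))"
  by (induction p) auto

lemma pconsts_psubst: "pconsts (psubst \<theta> p) = pconsts p \<union> (\<Union>v\<in>pvars p. pconsts (\<theta> v))"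
  by (induction p) auto

definition poly_endo_on :: "complex set \<Rightarrow> nat set \<Rightarrow> (nat \<Rightarrow> pexpr) \<Rightarrow> bool" where
  "poly_endo_on K W \<theta> \<longleftrightarrow> (\<forall>v\<in>W. in_poly_ring K W (\<theta> v))"

lemma poly_endo_on_mono: "K \<subseteq> K' \<Longrightarrow> poly_endo_on K W \<theta> \<Longrightarrow> poly_endo_on K' W \<theta>"
  unfolding poly_endo_on_def in_poly_ring_def by blast

lemma subst_val_cong_on:
  assumes "poly_endo_on K W \<theta>" "\<forall>v\<in>W. \<sigma> v = \<sigma>' v"
  shows "\<forall>v\<in>W. subst_val \<theta> \<sigma> v = subst_val \<theta> \<sigma>' v"
proof
  fix v
  assume "v \<in> W"
  then have "in_poly_ring K W (\<theta> v)"
    using assms(1) by (simp add: poly_endo_on_def)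
  then show "subst_val \<theta> \<sigma> v = subst_val \<theta> \<sigma>' v"
    unfolding subst_val_def using assms(2) by (rule peval_cong_in_poly_ring)
qed

lemma in_poly_ring_psubst:
  assumes "in_poly_ring K W p" "poly_endo_on K W \<theta>"
  shows "in_poly_ring K W (psubst \<theta> p)"
proof -
  obtain q where q: "pconsts q \<subseteq> K" "pvars q \<subseteq> W" "poly_eq p q"
    using assms(1) by (auto simp: in_poly_ring_def)
  define \<theta>' where
    "\<theta>' = (\<lambda>v. SOME r. pconsts r \<subseteq> K \<and> pvars r \<subseteq> W \<and> poly_eq (\<theta> v) r)"
  have \<theta>': "pconsts (\<theta>' v) \<subseteq> K \<and> pvars (\<theta>' v) \<subseteq> W \<and> poly_eq (\<theta> v) (\<theta>' v)"
    if "v \<in> W" for v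
  proof -
    have "\<exists>r. pconsts r \<subseteq> K \<and> pvars r \<subseteq> W \<and> poly_eq (\<theta> v) r"
      using assms(2) that unfolding poly_endo_on_def in_poly_ring_def by blast
    then show ?thesis
      unfolding \<theta>'_def by (rule someI_ex)
  qed
  have "peval \<sigma> (psubst \<theta> p) = peval \<sigma> (psubst \<theta>' q)" for \<sigma>
  proof -
    have "peval \<sigma> (psubst \<theta> p) = peval (subst_val \<theta> \<sigma>) q"
      using q(3) by (simp add: peval_psubst poly_eq_def)
    also have "\<dots> = peval (subst_val \<theta>' \<sigma>) q"
    proof (rule peval_cong)
      fix v
      assume "v \<in> pvars q"
      then show "subst_val \<theta> \<sigma> v = subst_val \<theta>' \<sigma> v"
        using q(2) \<theta>' unfolding subst_val_def poly_eq_def by blast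
    qed
    finally show ?thesis
      by (simp add: peval_psubst)
  qed
  moreover have "pconsts (psubst \<theta>' q) \<subseteq> K" "pvars (psubst \<theta>' q) \<subseteq> W"
    unfolding pconsts_psubst pvars_psubst using q(1,2) \<theta>' by blast+
  ultimately show ?thesis
    unfolding in_poly_ring_def poly_eq_def by blast
qed

lemma finite_pvars: "finite (pvars p)"
  by (induction p) auto

lemma peval_fun_upd_poly: "\<exists>q. \<forall>t. peval (\<sigma>(w := t)) p = poly q t"
proof (induction p)
  case (Var v)
  show ?case
  proof (cases "v = w")
    case True
    then show ?thesis
      by (intro exI[of _ "[:0, 1:]"]) simp
  next
    case False
    then show ?thesis
      by (intro exI[of _ "[:\<sigma> v:]"]) simp
  qed
next
  case (Const c)
  show ?case
    by (intro exI[of _ "[:c:]"]) simp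
next
  case (Add p q)
  then obtain a b where "\<forall>t. peval (\<sigma>(w := t)) p = poly a t" "\<forall>t. peval (\<sigma>(w := t)) q = poly b t"
    by blast
  then show ?case
    by (intro exI[of _ "a + b"]) (simp del: fun_upd_apply)
next
  case (Mul p q)
  then obtain a b where "\<forall>t. peval (\<sigma>(w := t)) p = poly a t" "\<forall>t. peval (\<sigma>(w := t)) q = poly b t"
    by blast
  then show ?case
    by (intro exI[of _ "a * b"]) (simp del: fun_upd_apply)
qed

lemma peval_eq_0_if_vanishes_on:
  assumes K: "infinite K" and vanish: "\<And>\<sigma>. range \<sigma> \<subseteq> K \<Longrightarrow> peval \<sigma> p = 0"
  shows "peval \<sigma> p = 0"
proof -
  \<comment> \<open>Free the variables one at a time: in the freed variable, p is a univariate polynomial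
    with every point of K as a root.\<close>
  have "\<forall>\<sigma>. (\<forall>v. v \<notin> V \<longrightarrow> \<sigma> v \<in> K) \<longrightarrow> peval \<sigma> p = 0" if "finite V" for V
    using that
  proof (induction V rule: finite_induct)
    case empty
    then show ?case
      using vanish by blast
  next
    case (insert w V)
    show ?case
    proof (intro allI impI)
      fix \<sigma> :: "nat \<Rightarrow> complex"
      assume \<sigma>: "\<forall>v. v \<notin> insert w V \<longrightarrow> \<sigma> v \<in> K"
      obtain q where q: "\<And>t. peval (\<sigma>(w := t)) p = poly q t"
        using peval_fun_upd_poly by blast
      have "K \<subseteq> {t. poly q t = 0}"
      proof
        fix t assume "t \<in> K"
        then have "\<forall>v. v \<notin> V \<longrightarrow> (\<sigma>(w := t)) v \<in> K"
          using \<sigma> by simp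
        then have "peval (\<sigma>(w := t)) p = 0"
          using insert.IH by blast
        then show "t \<in> {t. poly q t = 0}"
          using q by simp
      qed
      then have "q = 0"
        using K poly_roots_finite finite_subset by blast
      then show "peval \<sigma> p = 0"
        using q[of "\<sigma> w"] by simp
    qed
  qed
  moreover obtain k where "k \<in> K"
    using K infinite_imp_nonempty by blast
  ultimately have "peval (\<lambda>v. if v \<in> pvars p then \<sigma> v else k) p = 0"
    using finite_pvars[of p] by simp
  moreover have "peval (\<lambda>v. if v \<in> pvars p then \<sigma> v else k) p = peval \<sigma> p"
    by (rule peval_cong) simp
  ultimately show ?thesis
    by simp
qed

lemma peval_eq_if_eq_on_Ints:
  assumes "\<And>s :: nat \<Rightarrow> int. peval (of_int \<circ> s) p = peval (of_int \<circ> s) q"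
  shows "peval \<sigma> p = peval \<sigma> q"
proof -
  have "infinite (\<int> :: complex set)"
  proof
    assume "finite (\<int> :: complex set)"
    then have "finite (UNIV :: int set)"
      using finite_imageD[of "of_int :: int \<Rightarrow> complex" UNIV] by (simp add: Ints_def inj_def)
    then show False
      by simp
  qed
  moreover have "peval \<tau> (Add p (Mul (Const (-1)) q)) = 0" if "range \<tau> \<subseteq> \<int>" for \<tau>
  proof -
    have "\<forall>v. \<exists>k. \<tau> v = of_int k"
      using that by (auto elim!: Ints_cases)
    then obtain s where "\<And>v. \<tau> v = of_int (s v)"
      by metis
    then have "\<tau> = of_int \<circ> s"
      by auto
    then show ?thesis
      using assms by simp
  qed
  ultimately have "peval \<sigma> (Add p (Mul (Const (-1)) q)) = 0"
    by (rule peval_eq_0_if_vanishes_on)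
  then show ?thesis
    by simp
qed

lemma cf_eval_Nil [simp]: "cf_eval \<sigma> n [] = 0"
  by (simp add: cf_eval_def)

lemma cf_eval_Cons [simp]:
  "cf_eval \<sigma> n ((\<alpha>, a, b) # cf) = peval \<sigma> \<alpha> * of_nat n ^ a * b ^ n + cf_eval \<sigma> n cf"
  by (simp add: cf_eval_def)

lemma cf_eval_append [simp]: "cf_eval \<sigma> n (xs @ ys) = cf_eval \<sigma> n xs + cf_eval \<sigma> n ys"
  by (simp add: cf_eval_def)

lemma cf_eval_map_Mul:
  "cf_eval \<sigma> n (map (\<lambda>(\<beta>, a', b'). (Mul \<alpha> \<beta>, a + a', b * b')) cf)
     = peval \<sigma> \<alpha> * of_nat n ^ a * b ^ n * cf_eval \<sigma> n cf"
  by (induction cf) (auto simp: power_add algebra_simps)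

lemma cf_eval_concat_map_Mul:
  "cf_eval \<sigma> n (concat (map (\<lambda>(\<alpha>, a, b). map (\<lambda>(\<beta>, a', b'). (Mul \<alpha> \<beta>, a + a', b * b')) cf') cf))
     = cf_eval \<sigma> n cf * cf_eval \<sigma> n cf'"
  by (induction cf) (auto simp: cf_eval_map_Mul algebra_simps)

lemma cf_eval_cf_of: "cf_eval \<sigma> n (cf_of cl p) = peval (\<lambda>v. cf_eval \<sigma> n (cl v)) p"
  by (induction p) (auto simp: cf_eval_concat_map_Mul)

lemma cf_eval_cf_subst: "cf_eval \<sigma> n (cf_subst \<theta> cf) = cf_eval (subst_val \<theta> \<sigma>) n cf"
  by (induction cf) (auto simp: cf_subst_def peval_psubst)

lemma cf_eval_polynomial: "\<exists>e. \<forall>\<sigma>. cf_eval \<sigma> n cf = peval \<sigma> e"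
proof (induction cf)
  case Nil
  show ?case
    by (intro exI[of _ "Const 0"]) simp
next
  case (Cons t cf)
  obtain e where "\<forall>\<sigma>. cf_eval \<sigma> n cf = peval \<sigma> e"
    using Cons.IH by blast
  moreover obtain \<alpha> a b where "t = (\<alpha>, a, b)"
    by (cases t)
  ultimately show ?case
    by (intro exI[of _ "Add (Mul \<alpha> (Const (of_nat n ^ a * b ^ n))) e"]) (simp add: mult.assoc)
qed

definition cform_over :: "complex set \<Rightarrow> nat set \<Rightarrow> cform \<Rightarrow> bool" where
  "cform_over K W cf \<longleftrightarrow> (\<forall>(\<alpha>, a, b)\<in>set cf. in_poly_ring K W \<alpha> \<and> algebraic b)"

lemma cform_over_append [simp]:
  "cform_over K W (xs @ ys) \<longleftrightarrow> cform_over K W xs \<and> cform_over K W ys"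
  unfolding cform_over_def by (simp only: set_append ball_Un)

lemma is_closed_form_iff:
  "is_closed_form d \<eta> n0 cl \<longleftrightarrow>
     (\<forall>i<d. cform_over alg_nums {0..<d} (cl i) \<and>
            (\<forall>s :: nat \<Rightarrow> int. \<forall>n \<ge> n0.
               cf_eval (of_int \<circ> s) n (cl i) = peval (of_int \<circ> s) (upd_pow \<eta> n i)))"
  by (simp only: is_closed_form_def cform_over_def)

lemma is_closed_form_cform_over:
  "is_closed_form d \<eta> n0 cl \<Longrightarrow> i < d \<Longrightarrow> cform_over alg_nums {0..<d} (cl i)"
  unfolding is_closed_form_iff by blast

lemma is_closed_form_eval:
  assumes "is_closed_form d \<eta> n0 cl" "i < d" "n0 \<le> n"
  shows "cf_eval \<sigma> n (cl i) = peval \<sigma> (upd_pow \<eta> n i)"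
proof -
  obtain e where e: "\<And>\<sigma>. cf_eval \<sigma> n (cl i) = peval \<sigma> e"
    using cf_eval_polynomial by blast
  have int_eq: "cf_eval (of_int \<circ> s) n (cl i) = peval (of_int \<circ> s) (upd_pow \<eta> n i)" for s
    using assms unfolding is_closed_form_iff by blast
  have "peval \<sigma> e = peval \<sigma> (upd_pow \<eta> n i)"
    by (rule peval_eq_if_eq_on_Ints) (simp add: int_eq flip: e)
  then show ?thesis
    by (simp add: e)
qed

lemma is_closed_formI:
  assumes "\<And>i. i < d \<Longrightarrow> cform_over alg_nums {0..<d} (cl i)"
    and "\<And>\<sigma> n i. i < d \<Longrightarrow> n0 \<le> n \<Longrightarrow> cf_eval \<sigma> n (cl i) = peval \<sigma> (upd_pow \<eta> n i)"
  shows "is_closed_form d \<eta> n0 cl"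
  unfolding is_closed_form_iff using assms by blast

lemma cform_over_cf_subst:
  assumes "cform_over K W cf" "poly_endo_on K W \<theta>"
  shows "cform_over K W (cf_subst \<theta> cf)"
  using assms in_poly_ring_psubst by (fastforce simp: cform_over_def cf_subst_def)

lemma funpow_conj_eq_on:
  fixes E T T' :: "('a \<Rightarrow> 'b) \<Rightarrow> 'a \<Rightarrow> 'b"
  assumes E: "\<And>\<sigma> \<sigma>'. \<forall>v\<in>W. \<sigma> v = \<sigma>' v \<Longrightarrow> \<forall>v\<in>W. E \<sigma> v = E \<sigma>' v"
    and T: "\<And>\<sigma> \<sigma>'. \<forall>v\<in>W. \<sigma> v = \<sigma>' v \<Longrightarrow> \<forall>v\<in>W. T \<sigma> v = T \<sigma>' v"
    and T': "\<And>\<sigma> \<sigma>'. \<forall>v\<in>W. \<sigma> v = \<sigma>' v \<Longrightarrow> \<forall>v\<in>W. T' \<sigma> v = T' \<sigma>' v"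
    and inverse: "\<And>\<sigma>. \<forall>v\<in>W. T' (T \<sigma>) v = \<sigma> v"
  shows "\<forall>v\<in>W. ((T \<circ> E \<circ> T') ^^ n) (T \<sigma>) v = T ((E ^^ n) \<sigma>) v"
proof (induction n)
  case 0
  show ?case
    by simp
next
  case (Suc n)
  have IH: "\<forall>v\<in>W. T (E (T' (((T \<circ> E \<circ> T') ^^ n) (T \<sigma>)))) v = T (E (T' (T ((E ^^ n) \<sigma>)))) v"
    using T[OF E[OF T'[OF Suc.IH]]] .
  have cancel: "\<forall>v\<in>W. T (E (T' (T ((E ^^ n) \<sigma>)))) v = T (E ((E ^^ n) \<sigma>)) v"
    using T[OF E[OF inverse]] .
  show ?case
  proof
    fix v
    assume "v \<in> W"
    have "((T \<circ> E \<circ> T') ^^ Suc n) (T \<sigma>) v = T (E (T' (((T \<circ> E \<circ> T') ^^ n) (T \<sigma>)))) v"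
      by (simp only: funpow.simps comp_apply)
    also have "\<dots> = T (E (T' (T ((E ^^ n) \<sigma>)))) v"
      using IH \<open>v \<in> W\<close> by blast
    also have "\<dots> = T ((E ^^ Suc n) \<sigma>) v"
      using cancel \<open>v \<in> W\<close> by simp
    finally show "((T \<circ> E \<circ> T') ^^ Suc n) (T \<sigma>) v = T ((E ^^ Suc n) \<sigma>) v" .
  qed
qed

lemma closed_form_conj:
  assumes endo: "poly_endo_on UNIV W \<eta>" "poly_endo_on UNIV W \<theta>" "poly_endo_on UNIV W \<theta>'"
    and inverse: "\<And>\<sigma> v. v \<in> W \<Longrightarrow> peval \<sigma> (psubst \<theta> (\<theta>' v)) = \<sigma> v"
    and closed: "\<And>\<sigma> v. v \<in> W \<Longrightarrow>
      cf_eval \<sigma> n (cl v) = peval \<sigma> (upd_pow (\<lambda>x. psubst \<theta>' (psubst \<eta> (\<theta> x))) n v)"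
    and "i \<in> W"
  shows "cf_eval \<sigma> n (cf_subst \<theta> (cf_of cl (\<theta>' i))) = peval \<sigma> (upd_pow \<eta> n i)"
proof -
  let ?T = "subst_val \<theta>" and ?E = "subst_val \<eta>" and ?T' = "subst_val \<theta>'"
  have conj: "subst_val (\<lambda>x. psubst \<theta>' (psubst \<eta> (\<theta> x))) = ?T \<circ> ?E \<circ> ?T'"
    by (simp add: fun_eq_iff subst_val_psubst)
  have T'_T: "\<forall>v\<in>W. ?T' (?T \<tau>) v = \<tau> v" for \<tau>
    using inverse by (simp add: subst_val_def peval_psubst)
  have conj_pow: "\<forall>v\<in>W. ((?T \<circ> ?E \<circ> ?T') ^^ n) (?T \<sigma>) v = ?T ((?E ^^ n) \<sigma>) v"
    using subst_val_cong_on[OF endo(1)] subst_val_cong_on[OF endo(2)] subst_val_cong_on[OF endo(3)] T'_T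
    by (rule funpow_conj_eq_on)
  have "cf_eval \<sigma> n (cf_subst \<theta> (cf_of cl (\<theta>' i))) = peval (\<lambda>v. cf_eval (?T \<sigma>) n (cl v)) (\<theta>' i)"
    by (simp add: cf_eval_cf_subst cf_eval_cf_of)
  also have "\<dots> = peval (((?T \<circ> ?E \<circ> ?T') ^^ n) (?T \<sigma>)) (\<theta>' i)"
    using endo(3) \<open>i \<in> W\<close> closed
    by (intro peval_cong_in_poly_ring[of UNIV W]) (auto simp: poly_endo_on_def peval_upd_pow conj)
  also have "\<dots> = ?T' (((?T \<circ> ?E \<circ> ?T') ^^ n) (?T \<sigma>)) i"
    by (simp add: subst_val_def)
  also have "\<dots> = ?T' (?T ((?E ^^ n) \<sigma>)) i"
    using subst_val_cong_on[OF endo(3) conj_pow] \<open>i \<in> W\<close> by blast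
  also have "\<dots> = peval \<sigma> (upd_pow \<eta> n i)"
    using T'_T \<open>i \<in> W\<close> by (simp add: peval_upd_pow)
  finally show ?thesis .
qed

lemma lin_expr_Nil: "lin_expr [] vs = Const 0" "lin_expr cs [] = Const 0"
  by (simp_all add: lin_expr_def)

lemma lin_expr_Cons:
  "lin_expr (c # cs) (v # vs) = Add (Mul (Const c) (Var v)) (lin_expr cs vs)"
  by (simp add: lin_expr_def)

lemma pvars_lin_expr: "pvars (lin_expr cs vs) \<subseteq> set vs"
  by (induction cs vs rule: list_induct2') (auto simp: lin_expr_Nil lin_expr_Cons)

lemma pconsts_lin_expr: "pconsts (lin_expr cs vs) \<subseteq> insert 0 (set cs)"
  by (induction cs vs rule: list_induct2') (auto simp: lin_expr_Nil lin_expr_Cons)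

lemma cform_over_cf_of_lin_expr:
  assumes "0 \<in> K" "set cs \<subseteq> K" "\<And>v. v \<in> set vs \<Longrightarrow> cform_over K W (cl v)"
  shows "cform_over K W (cf_of cl (lin_expr cs vs))"
proof -
  have zero: "cform_over K W (cf_of cl (Const 0))"
    using \<open>0 \<in> K\<close> by (auto simp: cform_over_def in_poly_ring_def poly_eq_def intro!: exI[of _ "Const 0"])
  show ?thesis
    using assms(2,3)
  proof (induction cs vs rule: list_induct2')
    case (4 c cs v vs)
    have "cform_over K W (map (\<lambda>(\<beta>, a', b'). (Mul (Const c) \<beta>, 0 + a', 1 * b')) (cl v))"
      using "4.prems" in_poly_ring_Mul_Const by (fastforce simp: cform_over_def)
    then show ?case
      using 4 by (simp add: lin_expr_Cons)
  qed (use zero in \<open>simp_all add: lin_expr_Nil\<close>)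
qed

lemma peval_lin_expr:
  "length cs = length vs \<Longrightarrow> peval \<sigma> (lin_expr cs vs) = (\<Sum>i<length vs. cs ! i * \<sigma> (vs ! i))"
  by (induction cs vs rule: list_induct2)
    (simp_all add: lin_expr_Nil lin_expr_Cons sum.lessThan_Suc_shift del: sum.lessThan_Suc)

lemma peval_lin_expr_mat_row:
  "dim_col M = length vs \<Longrightarrow>
    peval \<sigma> (lin_expr (mat_row_list M r) vs) = (\<Sum>c<length vs. M $$ (r, c) * \<sigma> (vs ! c))"
  by (simp add: peval_lin_expr mat_row_list_def)

lemma peval_lin_expr_mat_row_mult:
  assumes "Q \<in> carrier_mat m L" "P \<in> carrier_mat L k" "length us = L" "length vs = k" "r < m"
    and \<tau>: "\<And>c. c < L \<Longrightarrow> \<tau> (us ! c) = peval \<sigma> (lin_expr (mat_row_list P c) vs)"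
  shows "peval \<tau> (lin_expr (mat_row_list Q r) us) = peval \<sigma> (lin_expr (mat_row_list (Q * P) r) vs)"
proof -
  have "peval \<tau> (lin_expr (mat_row_list Q r) us)
      = (\<Sum>c<L. Q $$ (r, c) * (\<Sum>j<k. P $$ (c, j) * \<sigma> (vs ! j)))"
    using assms by (simp add: peval_lin_expr_mat_row)
  also have "\<dots> = (\<Sum>j<k. (\<Sum>c<L. Q $$ (r, c) * P $$ (c, j)) * \<sigma> (vs ! j))"
    by (simp add: sum_distrib_left sum_distrib_right mult.assoc) (rule sum.swap)
  also have "\<dots> = (\<Sum>j<k. (Q * P) $$ (r, j) * \<sigma> (vs ! j))"
    using assms by (simp add: scalar_prod_def lessThan_atLeast0)
  also have "\<dots> = peval \<sigma> (lin_expr (mat_row_list (Q * P) r) vs)"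
    using assms by (simp add: peval_lin_expr_mat_row)
  finally show ?thesis .
qed

lemma peval_lin_expr_one_mat_row:
  assumes "r < length vs"
  shows "peval \<sigma> (lin_expr (mat_row_list (1\<^sub>m (length vs)) r) vs) = \<sigma> (vs ! r)"
proof -
  have "peval \<sigma> (lin_expr (mat_row_list (1\<^sub>m (length vs)) r) vs)
      = (\<Sum>c<length vs. (if r = c then 1 else 0) * \<sigma> (vs ! c))"
    using assms by (auto simp: peval_lin_expr_mat_row intro: sum.cong)
  also have "\<dots> = (\<Sum>c<length vs. if c = r then \<sigma> (vs ! c) else 0)"
    by (rule sum.cong) auto
  also have "\<dots> = \<sigma> (vs ! r)"
    using assms by simp
  finally show ?thesis .
qed

lemma in_set_concat_nthE:
  assumes "v \<in> set (concat xss)"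
  obtains k r where "k < length xss" "r < length (xss ! k)" "v = xss ! k ! r"
proof -
  obtain xs where "xs \<in> set xss" "v \<in> set xs"
    using assms by auto
  then show ?thesis
    using that by (metis in_set_conv_nth)
qed

definition blockwise_linear :: "nat list list \<Rightarrow> complex mat list \<Rightarrow> (nat \<Rightarrow> pexpr) \<Rightarrow> bool" where
  "blockwise_linear Ss Ms \<theta> \<longleftrightarrow>
     (\<forall>k < length Ss. \<forall>r < length (Ss ! k).
        \<theta> (Ss ! k ! r) = lin_expr (mat_row_list (Ms ! k) r) (Ss ! k))"

lemma blockwise_linearE:
  assumes "blockwise_linear Ss Ms \<theta>" "v \<in> set (concat Ss)"
  obtains k r where "k < length Ss" "r < length (Ss ! k)" "v = Ss ! k ! r"
    "\<theta> v = lin_expr (mat_row_list (Ms ! k) r) (Ss ! k)"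
proof -
  obtain k r where "k < length Ss" "r < length (Ss ! k)" "v = Ss ! k ! r"
    using assms(2) by (rule in_set_concat_nthE)
  then show ?thesis
    using that assms(1) unfolding blockwise_linear_def by blast
qed

lemma blockwise_linear_poly_endo_on:
  assumes \<theta>: "blockwise_linear Ss Ms \<theta>" and "0 \<in> K"
    and rows: "\<And>k r. k < length Ss \<Longrightarrow> r < length (Ss ! k) \<Longrightarrow> set (mat_row_list (Ms ! k) r) \<subseteq> K"
  shows "poly_endo_on K (set (concat Ss)) \<theta>"
  unfolding poly_endo_on_def
proof
  fix v
  assume "v \<in> set (concat Ss)"
  then obtain k r where kr: "k < length Ss" "r < length (Ss ! k)"
    and \<theta>v: "\<theta> v = lin_expr (mat_row_list (Ms ! k) r) (Ss ! k)"
    using \<theta> by (elim blockwise_linearE)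
  have "pconsts (\<theta> v) \<subseteq> K"
    using pconsts_lin_expr \<open>0 \<in> K\<close> rows[OF kr] unfolding \<theta>v by blast
  moreover have "pvars (\<theta> v) \<subseteq> set (concat Ss)"
    using pvars_lin_expr nth_mem[OF kr(1)] unfolding \<theta>v by fastforce
  ultimately show "in_poly_ring K (set (concat Ss)) (\<theta> v)"
    unfolding in_poly_ring_def poly_eq_def by blast
qed

lemma blockwise_linear_cform_over_cf_of:
  assumes \<theta>: "blockwise_linear Ss Ms \<theta>" "v \<in> set (concat Ss)" and "0 \<in> K"
    and rows: "\<And>k r. k < length Ss \<Longrightarrow> r < length (Ss ! k) \<Longrightarrow> set (mat_row_list (Ms ! k) r) \<subseteq> K"
    and cl: "\<And>u. u \<in> set (concat Ss) \<Longrightarrow> cform_over K W (cl u)"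
  shows "cform_over K W (cf_of cl (\<theta> v))"
proof -
  obtain k r where kr: "k < length Ss" "r < length (Ss ! k)"
    and \<theta>v: "\<theta> v = lin_expr (mat_row_list (Ms ! k) r) (Ss ! k)"
    using \<theta> by (elim blockwise_linearE)
  show ?thesis
    unfolding \<theta>v using \<open>0 \<in> K\<close> rows[OF kr] cl nth_mem[OF kr(1)]
    by (intro cform_over_cf_of_lin_expr) auto
qed

lemma blockwise_linear_inverse:
  assumes \<theta>: "blockwise_linear Ss Ps \<theta>" and \<theta>': "blockwise_linear Ss Qs \<theta>'"
    and inv: "\<And>k. k < length Ss \<Longrightarrow>
      Ps ! k \<in> carrier_mat (length (Ss ! k)) (length (Ss ! k)) \<and>
      Qs ! k \<in> carrier_mat (length (Ss ! k)) (length (Ss ! k)) \<and>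
      Qs ! k * Ps ! k = 1\<^sub>m (length (Ss ! k))"
    and "v \<in> set (concat Ss)"
  shows "peval \<sigma> (psubst \<theta> (\<theta>' v)) = \<sigma> v"
proof -
  obtain k r where kr: "k < length Ss" "r < length (Ss ! k)" "v = Ss ! k ! r"
    and \<theta>'v: "\<theta>' v = lin_expr (mat_row_list (Qs ! k) r) (Ss ! k)"
    using \<theta>' \<open>v \<in> set (concat Ss)\<close> by (elim blockwise_linearE)
  have "peval \<sigma> (psubst \<theta> (\<theta>' v)) = peval (subst_val \<theta> \<sigma>) (lin_expr (mat_row_list (Qs ! k) r) (Ss ! k))"
    by (simp add: peval_psubst \<theta>'v)
  also have "\<dots> = peval \<sigma> (lin_expr (mat_row_list (Qs ! k * Ps ! k) r) (Ss ! k))"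
    using inv[OF kr(1)] kr \<theta> by (intro peval_lin_expr_mat_row_mult) (auto simp: blockwise_linear_def subst_val_def)
  also have "\<dots> = \<sigma> v"
    using inv[OF kr(1)] kr by (simp add: peval_lin_expr_one_mat_row)
  finally show ?thesis .
qed

lemma solvable_with_vars: "solvable_with d \<eta> Ss As \<Longrightarrow> set (concat Ss) = {0..<d}"
  by (simp add: solvable_with_def)

lemma solvable_with_poly_endo_on:
  assumes solv: "solvable_with d \<eta> Ss As"
  shows "poly_endo_on \<int> {0..<d} \<eta>"
  unfolding poly_endo_on_def
proof
  fix v
  assume "v \<in> {0..<d}"
  then obtain k r where kr: "k < length Ss" "r < length (Ss ! k)" "v = Ss ! k ! r"
    using solvable_with_vars[OF solv] by (metis in_set_concat_nthE)
  define row where "row = mat_row_list (map_mat of_int (As ! k)) r"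
  obtain p where p: "in_poly_ring \<int> (\<Union>j<k. set (Ss ! j)) p"
    and \<eta>v: "poly_eq (\<eta> v) (Add (lin_expr row (Ss ! k)) p)"
    using solv kr unfolding solvable_with_def row_def by blast
  obtain q where q: "pconsts q \<subseteq> \<int>" "pvars q \<subseteq> (\<Union>j<k. set (Ss ! j))" "poly_eq p q"
    using p by (auto simp: in_poly_ring_def)
  have "As ! k \<in> carrier_mat (length (Ss ! k)) (length (Ss ! k))"
    using solv kr by (simp add: solvable_with_def)
  then have "set row \<subseteq> \<int>"
    using kr by (auto simp: row_def mat_row_list_def)
  then have "pconsts (Add (lin_expr row (Ss ! k)) q) \<subseteq> \<int>"
    using pconsts_lin_expr[of row "Ss ! k"] q(1) by auto
  moreover have "pvars (Add (lin_expr row (Ss ! k)) q) \<subseteq> {0..<d}"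
    using pvars_lin_expr[of row "Ss ! k"] q(2) kr(1) solvable_with_vars[OF solv] by force
  moreover have "poly_eq (\<eta> v) (Add (lin_expr row (Ss ! k)) q)"
    using \<eta>v q(3) by (simp add: poly_eq_def)
  ultimately show "in_poly_ring \<int> {0..<d} (\<eta> v)"
    unfolding in_poly_ring_def by blast
qed

theorem theorem16:
  fixes d n0 :: nat
    and eta_s :: "nat \<Rightarrow> pexpr"
    and Ss :: "nat list list" and As :: "int mat list"
    and Ps Pinvs :: "complex mat list"
    and theta theta_inv :: "nat \<Rightarrow> pexpr"
    and cl_t :: "nat \<Rightarrow> cform"
  assumes solv: "solvable_with d eta_s Ss As"
    and lenP: "length Ps = length Ss" "length Pinvs = length Ss"
    and P_carrier: "\<forall>i < length Ss. Ps ! i \<in> carrier_mat (length (Ss ! i)) (length (Ss ! i))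
                                    \<and> Pinvs ! i \<in> carrier_mat (length (Ss ! i)) (length (Ss ! i))"
    and P_inv: "\<forall>i < length Ss. Ps ! i * Pinvs ! i = 1\<^sub>m (length (Ss ! i))
                               \<and> Pinvs ! i * Ps ! i = 1\<^sub>m (length (Ss ! i))"
    and P_alg: "\<forall>i < length Ss. \<forall>r < length (Ss ! i). \<forall>c < length (Ss ! i).
                  algebraic (Ps ! i $$ (r,c)) \<and> algebraic (Pinvs ! i $$ (r,c))"
    and jordan: "\<forall>i < length Ss. \<exists>n_as. 0 \<notin> fst ` set n_as \<and>
                  Ps ! i * map_mat of_int (As ! i) * Pinvs ! i = jordan_matrix n_as"
    and theta_def: "\<forall>i < length Ss. \<forall>r < length (Ss ! i).
                  theta (Ss ! i ! r) = lin_expr (mat_row_list (Ps ! i) r) (Ss ! i)"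
    and theta_inv_def: "\<forall>i < length Ss. \<forall>r < length (Ss ! i).
                  theta_inv (Ss ! i ! r) = lin_expr (mat_row_list (Pinvs ! i) r) (Ss ! i)"
    and twn: "twn_update d (\<lambda>x. psubst theta_inv (psubst eta_s (theta x)))"
    and cl_t: "is_closed_form d (\<lambda>x. psubst theta_inv (psubst eta_s (theta x))) n0 cl_t"
  shows "is_closed_form d eta_s n0 (\<lambda>x. cf_subst theta (cf_of cl_t (theta_inv x)))"
proof -
  have vars: "set (concat Ss) = {0..<d}"
    using solv by (rule solvable_with_vars)
  have theta: "blockwise_linear Ss Ps theta" and theta_inv: "blockwise_linear Ss Pinvs theta_inv"
    using theta_def theta_inv_def by (simp_all add: blockwise_linear_def)
  have rows_alg:
    "set (mat_row_list (Ps ! k) r) \<subseteq> alg_nums" "set (mat_row_list (Pinvs ! k) r) \<subseteq> alg_nums"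
    if "k < length Ss" "r < length (Ss ! k)" for k r
    using P_alg P_carrier that by (auto simp: mat_row_list_def alg_nums_def)
  have zero_alg: "0 \<in> alg_nums"
    by (simp add: alg_nums_def)
  have endo: "poly_endo_on alg_nums {0..<d} theta" "poly_endo_on alg_nums {0..<d} theta_inv"
    using blockwise_linear_poly_endo_on[OF theta zero_alg]
      blockwise_linear_poly_endo_on[OF theta_inv zero_alg] rows_alg vars by simp_all
  have eta_endo: "poly_endo_on UNIV {0..<d} eta_s"
    using poly_endo_on_mono[OF _ solvable_with_poly_endo_on[OF solv]] by blast
  have inverse: "peval \<sigma> (psubst theta (theta_inv v)) = \<sigma> v" if "v \<in> {0..<d}" for \<sigma> v
  proof (rule blockwise_linear_inverse[OF theta theta_inv])
    show "v \<in> set (concat Ss)"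
      using that vars by simp
  qed (use P_carrier P_inv in simp)
  have cl_t_cform: "cform_over alg_nums {0..<d} (cl_t u)" if "u \<in> set (concat Ss)" for u
    using is_closed_form_cform_over[OF cl_t] that unfolding vars by simp
  show ?thesis
  proof (rule is_closed_formI)
    fix i
    assume "i < d"
    have "cform_over alg_nums {0..<d} (cf_of cl_t (theta_inv i))"
    proof (rule blockwise_linear_cform_over_cf_of[OF theta_inv _ zero_alg])
      show "i \<in> set (concat Ss)"
        using \<open>i < d\<close> vars by simp
    qed (fact rows_alg(2) cl_t_cform)+
    then show "cform_over alg_nums {0..<d} (cf_subst theta (cf_of cl_t (theta_inv i)))"
      using endo(1) by (rule cform_over_cf_subst)
  next
    fix \<sigma> n i
    assume "i < d" "n0 \<le> n"
    then show "cf_eval \<sigma> n (cf_subst theta (cf_of cl_t (theta_inv i))) = peval \<sigma> (upd_pow eta_s n i)"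
      using closed_form_conj[OF eta_endo endo[THEN poly_endo_on_mono[rotated]] inverse]
        is_closed_form_eval[OF cl_t]
      by simp
  qed
qed

end
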